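(* Let $\mathcal{M}$ be a matroid on $[n]$, $J=J(\mathcal{M})$, and let $N$ be a monomial. (1) If $N\notin J$, then $SF_\ell(J:N)=SF_\ell(J):N$ for all $\ell\ge1$. (2) If $N\in G(J)$, then for every $v$ with $x_v\mid N$ and every $\ell>1$, $$SF_\ell(J):N=SF_{\ell-1}\big(J(\mathcal{M}/v):N\big).$$
   Context: $R=\mathbb{K}[x_1,\ldots,x_n]$, $\mathbb{K}$ a field; $\mathfrak p_F=(x_i:i\in F)$. The cover ideal of a matroid $\mathcal{N}$ on $E\subseteq[n]$ is $J(\mathcal{N})=\bigcap_{F\in\mathcal{B}(\mathcal{N})}\mathfrak p_F$, formed in $\mathbb{K}[x_i:i\in E]$ and extended to $R$. $\mathcal{M}/v$ is the contraction of $\mathcal{M}$ by $\{v\}$ (a matroid on $[n]-\{v\}$). For a squarefree monomial ideal $I$ with minimal primes $\mathfrak q_j$, $I^{(\ell)}=\bigcap_j\mathfrak q_j^\ell$ and $SF_\ell(I)$ is the ideal generated by the squarefree monomials in $I^{(\ell)}$ ($SF_\ell(I)=0$ if there are none). $G(\cdot)$ denotes minimal monomial generators. *)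

theory Defs
  imports Main
begin

text \<open>Monomials of R = K[x_1,...,x_n] are encoded by their exponent vectors
  (functions nat => nat vanishing outside {1..n}).  A monomial ideal is encoded
  by the set of monomials it contains; two monomial ideals are equal iff these
  sets coincide.\<close>

definition monomials :: "nat \<Rightarrow> (nat \<Rightarrow> nat) set" where
  "monomials n = {m. \<forall>i. i \<notin> {1..n} \<longrightarrow> m i = 0}"

definition mdvd :: "(nat \<Rightarrow> nat) \<Rightarrow> (nat \<Rightarrow> nat) \<Rightarrow> bool" where
  "mdvd a b \<longleftrightarrow> (\<forall>i. a i \<le> b i)"

definition mmult :: "(nat \<Rightarrow> nat) \<Rightarrow> (nat \<Rightarrow> nat) \<Rightarrow> (nat \<Rightarrow> nat)" where
  "mmult a b = (\<lambda>i. a i + b i)"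

definition sqfree_mon :: "(nat \<Rightarrow> nat) \<Rightarrow> bool" where
  "sqfree_mon m \<longleftrightarrow> (\<forall>i. m i \<le> 1)"

definition prime_mon :: "nat \<Rightarrow> nat set \<Rightarrow> (nat \<Rightarrow> nat) set" where
  "prime_mon n F = {m \<in> monomials n. \<exists>i\<in>F. 0 < m i}"

text \<open>Monomials in p_F^l: total degree in the variables of F is at least l.\<close>
definition prime_pow_mon :: "nat \<Rightarrow> nat set \<Rightarrow> nat \<Rightarrow> (nat \<Rightarrow> nat) set" where
  "prime_pow_mon n F l = {m \<in> monomials n. l \<le> (\<Sum>i\<in>F. m i)}"

definition matroid_bases :: "nat set \<Rightarrow> nat set set \<Rightarrow> bool" where
  "matroid_bases E \<B> \<longleftrightarrow> finite E \<and> \<B> \<noteq> {} \<and> (\<forall>F\<in>\<B>. F \<subseteq> E) \<and>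
     (\<forall>B1\<in>\<B>. \<forall>B2\<in>\<B>. \<forall>x\<in>B1 - B2. \<exists>y\<in>B2 - B1. insert y (B1 - {x}) \<in> \<B>)"

definition contract_bases :: "nat set set \<Rightarrow> nat \<Rightarrow> nat set set" where
  "contract_bases \<B> v =
     (if \<exists>F\<in>\<B>. v \<in> F then {F - {v} | F. F \<in> \<B> \<and> v \<in> F} else \<B>)"

definition cover_ideal :: "nat \<Rightarrow> nat set set \<Rightarrow> (nat \<Rightarrow> nat) set" where
  "cover_ideal n \<B> = monomials n \<inter> (\<Inter>F\<in>\<B>. prime_mon n F)"

definition colon :: "nat \<Rightarrow> (nat \<Rightarrow> nat) set \<Rightarrow> (nat \<Rightarrow> nat) \<Rightarrow> (nat \<Rightarrow> nat) set" where
  "colon n I N = {m \<in> monomials n. mmult m N \<in> I}"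

definition min_primes :: "nat \<Rightarrow> (nat \<Rightarrow> nat) set \<Rightarrow> nat set set" where
  "min_primes n I = {F. F \<subseteq> {1..n} \<and> I \<subseteq> prime_mon n F \<and>
                        (\<forall>G. G \<subset> F \<longrightarrow> \<not> I \<subseteq> prime_mon n G)}"

definition symb_pow :: "nat \<Rightarrow> (nat \<Rightarrow> nat) set \<Rightarrow> nat \<Rightarrow> (nat \<Rightarrow> nat) set" where
  "symb_pow n I l = monomials n \<inter> (\<Inter>F\<in>min_primes n I. prime_pow_mon n F l)"

text \<open>SF_l(I): ideal generated by the squarefree monomials of I^(l)
  (empty, i.e. the zero ideal, if there are none).\<close>
definition SF :: "nat \<Rightarrow> (nat \<Rightarrow> nat) set \<Rightarrow> nat \<Rightarrow> (nat \<Rightarrow> nat) set" where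
  "SF n I l = {m \<in> monomials n. \<exists>s\<in>symb_pow n I l. sqfree_mon s \<and> mdvd s m}"

definition mingens :: "(nat \<Rightarrow> nat) set \<Rightarrow> (nat \<Rightarrow> nat) set" where
  "mingens I = {m \<in> I. \<forall>m'\<in>I. mdvd m' m \<longrightarrow> m' = m}"

end

theory Submission
  imports Defs
begin

text \<open>The cover ideal of a clutter \<open>C\<close> has exactly the primes \<open>p\<^sub>F\<close>, \<open>F \<in> C\<close>, as minimal
  primes, so \<open>SF\<^sub>l(J)\<close> is generated by the squarefree monomials whose support meets every
  \<open>F \<in> C\<close> in at least \<open>l\<close> elements, and \<open>SF\<^sub>l(J) : N\<close> by those squarefree \<open>s\<close> for which
  \<open>s\<close> with the support of \<open>N\<close> filled in by ones has this property.
  By basis exchange, a weight that is maximal on a set \<open>T\<close> attains its minimum over the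
  bases of a matroid at a basis avoiding \<open>T\<close>, provided one exists.  Taking \<open>T = supp N\<close>
  (for \<open>N \<notin> J\<close>), resp. \<open>T = supp N - {v}\<close> (for \<open>N\<close> a minimal generator, whose minimality
  provides such a basis), only the bases avoiding \<open>T\<close> matter.  These are the minimal
  primes of \<open>J : N\<close>, resp. after removing \<open>v\<close> (which contributes exactly \<open>1\<close>) those
  of \<open>J(\<M>/v) : N\<close>.\<close>

definition clutter :: "'a set set \<Rightarrow> bool" where
  "clutter C \<longleftrightarrow> (\<forall>G1\<in>C. \<forall>G2\<in>C. G1 \<subseteq> G2 \<longrightarrow> G1 = G2)"

lemma clutter_subset: "clutter C \<Longrightarrow> D \<subseteq> C \<Longrightarrow> clutter D"
  unfolding clutter_def by blast

lemma matroid_bases_clutter: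
  assumes "matroid_bases E \<B>"
  shows "clutter \<B>"
  unfolding clutter_def
proof (intro ballI impI)
  fix B1 B2 assume B: "B1 \<in> \<B>" "B2 \<in> \<B>" "B1 \<subseteq> B2"
  show "B1 = B2"
  proof (rule ccontr)
    assume "B1 \<noteq> B2"
    then obtain x where "x \<in> B2 - B1" using B(3) by blast
    then obtain y where "y \<in> B1 - B2" using assms B unfolding matroid_bases_def by blast
    then show False using B(3) by blast
  qed
qed

lemma matroid_bases_contract_bases:
  assumes "matroid_bases E \<B>"
  shows "matroid_bases (E - {v}) (contract_bases \<B> v)"
proof (cases "\<exists>F\<in>\<B>. v \<in> F")
  case True
  then have contract_eq: "contract_bases \<B> v = {F - {v} | F. F \<in> \<B> \<and> v \<in> F}"
    unfolding contract_bases_def by simp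
  have "\<exists>y\<in>G2 - G1. insert y (G1 - {x}) \<in> contract_bases \<B> v"
    if G: "G1 \<in> contract_bases \<B> v" "G2 \<in> contract_bases \<B> v" and x: "x \<in> G1 - G2"
    for G1 G2 x
  proof -
    obtain F1 F2 where F: "F1 \<in> \<B>" "v \<in> F1" "G1 = F1 - {v}" "F2 \<in> \<B>" "v \<in> F2" "G2 = F2 - {v}"
      using G unfolding contract_eq by blast
    then have "x \<in> F1 - F2" using x by blast
    then obtain y where y: "y \<in> F2 - F1" "insert y (F1 - {x}) \<in> \<B>"
      using assms F(1,4) unfolding matroid_bases_def by blast
    have "insert y (G1 - {x}) = insert y (F1 - {x}) - {v}" "v \<in> insert y (F1 - {x})"
      using F(2,3) y(1) x by auto
    then have "insert y (G1 - {x}) \<in> contract_bases \<B> v" using y(2) unfolding contract_eq by blast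
    moreover have "y \<in> G2 - G1" using F y(1) by blast
    ultimately show ?thesis by blast
  qed
  moreover have "contract_bases \<B> v \<noteq> {}" using True unfolding contract_eq by blast
  moreover have "\<forall>G\<in>contract_bases \<B> v. G \<subseteq> E - {v}"
    using assms unfolding matroid_bases_def contract_eq by blast
  moreover have "finite (E - {v})" using assms unfolding matroid_bases_def by blast
  ultimately show ?thesis unfolding matroid_bases_def by blast
next
  case False
  then show ?thesis using assms unfolding matroid_bases_def contract_bases_def by auto
qed

lemma cover_ideal_subset_prime_mon_iff:
  assumes "H \<subseteq> {1..n}" "\<forall>G\<in>C. G \<subseteq> {1..n}"
  shows "cover_ideal n C \<subseteq> prime_mon n H \<longleftrightarrow> (\<exists>G\<in>C. G \<subseteq> H)"
proof
  assume cover_sub: "cover_ideal n C \<subseteq> prime_mon n H"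
  show "\<exists>G\<in>C. G \<subseteq> H"
  proof (rule ccontr)
    assume none: "\<not> (\<exists>G\<in>C. G \<subseteq> H)"
    define m where "m = (\<lambda>i. if i \<in> {1..n} - H then (1::nat) else 0)"
    have m: "m \<in> monomials n" unfolding m_def monomials_def by auto
    have "m \<in> prime_mon n G" if "G \<in> C" for G
    proof -
      obtain i where "i \<in> G" "i \<notin> H" using none \<open>G \<in> C\<close> by blast
      moreover have "i \<in> {1..n}" using assms(2) \<open>G \<in> C\<close> \<open>i \<in> G\<close> by blast
      ultimately show ?thesis using m unfolding prime_mon_def m_def by auto
    qed
    then have "m \<in> prime_mon n H" using m cover_sub unfolding cover_ideal_def by blast
    then show False unfolding prime_mon_def m_def by auto
  qed
next
  assume "\<exists>G\<in>C. G \<subseteq> H"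
  then show "cover_ideal n C \<subseteq> prime_mon n H"
    unfolding cover_ideal_def prime_mon_def by blast
qed

lemma min_primes_cover_ideal:
  assumes "\<forall>G\<in>C. G \<subseteq> {1..n}" "clutter C"
  shows "min_primes n (cover_ideal n C) = C"
proof
  show "min_primes n (cover_ideal n C) \<subseteq> C"
  proof
    fix F assume "F \<in> min_primes n (cover_ideal n C)"
    then have F: "F \<subseteq> {1..n}" "cover_ideal n C \<subseteq> prime_mon n F"
      and F_min: "\<forall>G. G \<subset> F \<longrightarrow> \<not> cover_ideal n C \<subseteq> prime_mon n G"
      unfolding min_primes_def by auto
    obtain G where G: "G \<in> C" "G \<subseteq> F"
      using F cover_ideal_subset_prime_mon_iff[OF F(1) assms(1)] by blast
    have "cover_ideal n C \<subseteq> prime_mon n G"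
      using G assms(1) cover_ideal_subset_prime_mon_iff[of G n C] by blast
    then show "F \<in> C" using G F_min by blast
  qed
next
  show "C \<subseteq> min_primes n (cover_ideal n C)"
  proof
    fix F assume F: "F \<in> C"
    have "F \<subseteq> {1..n}" using F assms(1) by blast
    moreover have "cover_ideal n C \<subseteq> prime_mon n F"
      using F assms(1) cover_ideal_subset_prime_mon_iff[of F n C] by blast
    moreover have "\<not> cover_ideal n C \<subseteq> prime_mon n G" if "G \<subset> F" for G
    proof
      assume "cover_ideal n C \<subseteq> prime_mon n G"
      moreover have "G \<subseteq> {1..n}" using that \<open>F \<subseteq> {1..n}\<close> by blast
      ultimately obtain G' where "G' \<in> C" "G' \<subseteq> G"
        using cover_ideal_subset_prime_mon_iff[OF _ assms(1)] by blast
      moreover from this that have "G' = F"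
        using F assms(2) unfolding clutter_def by (meson psubset_imp_subset subset_trans)
      ultimately show False using that by blast
    qed
    ultimately show "F \<in> min_primes n (cover_ideal n C)" unfolding min_primes_def by blast
  qed
qed

lemma SF_cover_ideal:
  assumes "\<forall>G\<in>C. G \<subseteq> {1..n}" "clutter C"
  shows "SF n (cover_ideal n C) l =
    {m \<in> monomials n. \<exists>s\<in>monomials n. sqfree_mon s \<and> mdvd s m \<and> (\<forall>G\<in>C. l \<le> sum s G)}"
  unfolding SF_def symb_pow_def min_primes_cover_ideal[OF assms] prime_pow_mon_def by blast

definition mon_support :: "(nat \<Rightarrow> nat) \<Rightarrow> nat set" where
  "mon_support m = {i. 0 < m i}"

lemma colon_cover_ideal:
  assumes "N \<in> monomials n"
  shows "colon n (cover_ideal n C) N = cover_ideal n {G\<in>C. G \<inter> mon_support N = {}}"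
  using assms
  unfolding colon_def cover_ideal_def prime_mon_def mmult_def monomials_def mon_support_def
  by auto

text \<open>Dividing by \<open>N\<close> frees the variables of \<open>supp N\<close>: a squarefree divisor of \<open>m N\<close>
  may as well be \<open>1\<close> there.\<close>
definition fill_support :: "(nat \<Rightarrow> nat) \<Rightarrow> (nat \<Rightarrow> nat) \<Rightarrow> nat \<Rightarrow> nat" where
  "fill_support N s = (\<lambda>i. if i \<in> mon_support N then 1 else s i)"

lemma sum_fill_support_avoiding:
  "G \<inter> mon_support N = {} \<Longrightarrow> sum (fill_support N s) G = sum s G"
  unfolding fill_support_def by (rule sum.cong) auto

lemma fill_support_maximal_on_support:
  "sqfree_mon s \<Longrightarrow> T \<subseteq> mon_support N \<Longrightarrow> \<forall>x\<in>T. \<forall>y. fill_support N s y \<le> fill_support N s x"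
  unfolding fill_support_def sqfree_mon_def by auto

lemma colon_SF_cover_ideal:
  assumes "\<forall>G\<in>C. G \<subseteq> {1..n}" "clutter C" "N \<in> monomials n"
  shows "colon n (SF n (cover_ideal n C) l) N =
    {m \<in> monomials n. \<exists>s\<in>monomials n. sqfree_mon s \<and> mdvd s m \<and>
                        (\<forall>G\<in>C. l \<le> sum (fill_support N s) G)}"
    (is "_ = ?fill")
proof (intro set_eqI iffI)
  fix m assume "m \<in> colon n (SF n (cover_ideal n C) l) N"
  then obtain t where m: "m \<in> monomials n" and t: "t \<in> monomials n" "sqfree_mon t"
    "mdvd t (mmult m N)" "\<forall>G\<in>C. l \<le> sum t G"
    using assms(3) unfolding colon_def SF_cover_ideal[OF assms(1,2)]
    by (auto simp: monomials_def mmult_def)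
  define s where "s = (\<lambda>i. if i \<in> mon_support N then 0 else t i)"
  have "s \<in> monomials n" "sqfree_mon s"
    using t(1,2) unfolding s_def monomials_def sqfree_mon_def by auto
  moreover have "mdvd s m"
    unfolding mdvd_def
  proof
    fix i
    have "t i \<le> m i + N i" using t(3) unfolding mdvd_def mmult_def by blast
    then show "s i \<le> m i" by (auto simp: s_def mon_support_def)
  qed
  moreover have "l \<le> sum (fill_support N s) G" if "G \<in> C" for G
  proof -
    have "t i \<le> fill_support N s i" for i
      using t(2) unfolding fill_support_def s_def sqfree_mon_def by auto
    then show ?thesis using t(4) that sum_mono order_trans by meson
  qed
  ultimately show "m \<in> ?fill" using m by blast
next
  fix m assume "m \<in> ?fill"
  then obtain s where m: "m \<in> monomials n" and s: "s \<in> monomials n" "sqfree_mon s" "mdvd s m"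
    "\<forall>G\<in>C. l \<le> sum (fill_support N s) G"
    by blast
  have "fill_support N s \<in> monomials n" using s(1) assms(3)
    unfolding fill_support_def monomials_def mon_support_def by auto
  moreover have "sqfree_mon (fill_support N s)"
    using s(2) unfolding fill_support_def sqfree_mon_def by auto
  moreover have "mdvd (fill_support N s) (mmult m N)"
    using s(3) unfolding fill_support_def mdvd_def mmult_def mon_support_def by auto
  ultimately show "m \<in> colon n (SF n (cover_ideal n C) l) N"
    using m s(4) assms(3) unfolding colon_def SF_cover_ideal[OF assms(1,2)]
    by (auto simp: mmult_def monomials_def)
qed

lemma matroid_bases_exists_avoiding_le_weight:
  assumes "matroid_bases E \<B>" "B0 \<in> \<B>" "B0 \<inter> T = {}" "\<forall>x\<in>T. \<forall>y. t y \<le> (t x :: nat)"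
    and "F \<in> \<B>"
  shows "\<exists>F'\<in>\<B>. F' \<inter> T = {} \<and> sum t F' \<le> sum t F"
  using assms(5)
proof (induction "card (F \<inter> T)" arbitrary: F rule: less_induct)
  case less
  show ?case
  proof (cases "F \<inter> T = {}")
    case True
    then show ?thesis using less.prems by blast
  next
    case False
    then obtain x where x: "x \<in> F" "x \<in> T" by blast
    then have "x \<in> F - B0" using assms(3) by blast
    then obtain y where y: "y \<in> B0 - F" "insert y (F - {x}) \<in> \<B>"
      using assms(1,2) less.prems unfolding matroid_bases_def by blast
    have fin: "finite F"
      using assms(1) less.prems unfolding matroid_bases_def by (meson finite_subset)
    have "y \<notin> T" using y(1) assms(3) by blast
    then have "insert y (F - {x}) \<inter> T \<subset> F \<inter> T" using x by auto
    then have "card (insert y (F - {x}) \<inter> T) < card (F \<inter> T)"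
      using fin by (simp add: psubset_card_mono)
    then obtain F' where F': "F' \<in> \<B>" "F' \<inter> T = {}" "sum t F' \<le> sum t (insert y (F - {x}))"
      using less.hyps y(2) by blast
    have "sum t (insert y (F - {x})) = t y + sum t (F - {x})" using y(1) fin by simp
    also have "\<dots> \<le> t x + sum t (F - {x})" using assms(4) x(2) by simp
    also have "\<dots> = sum t F" using x(1) fin by (simp add: sum.remove)
    finally show ?thesis using F' by auto
  qed
qed

lemma matroid_bases_weight_bound_iff_avoiding:
  assumes "matroid_bases E \<B>" "B0 \<in> \<B>" "B0 \<inter> T = {}" "\<forall>x\<in>T. \<forall>y. t y \<le> (t x :: nat)"
  shows "(\<forall>F\<in>\<B>. l \<le> sum t F) \<longleftrightarrow> (\<forall>F\<in>\<B>. F \<inter> T = {} \<longrightarrow> l \<le> sum t F)"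
proof
  assume avoiding: "\<forall>F\<in>\<B>. F \<inter> T = {} \<longrightarrow> l \<le> sum t F"
  show "\<forall>F\<in>\<B>. l \<le> sum t F"
  proof
    fix F assume "F \<in> \<B>"
    then obtain F' where "F' \<in> \<B>" "F' \<inter> T = {}" "sum t F' \<le> sum t F"
      using matroid_bases_exists_avoiding_le_weight[OF assms] by blast
    then show "l \<le> sum t F" using avoiding le_trans by blast
  qed
qed blast

lemma SF_colon_cover_ideal:
  assumes "matroid_bases {1..n} \<B>" "N \<in> monomials n" "N \<notin> cover_ideal n \<B>"
  shows "SF n (colon n (cover_ideal n \<B>) N) l = colon n (SF n (cover_ideal n \<B>) l) N"
proof -
  define C where "C = {G\<in>\<B>. G \<inter> mon_support N = {}}"
  have \<B>_sub: "\<forall>G\<in>\<B>. G \<subseteq> {1..n}" using assms(1) unfolding matroid_bases_def by blast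
  then have C_sub: "\<forall>G\<in>C. G \<subseteq> {1..n}" unfolding C_def by blast
  have "clutter \<B>" using matroid_bases_clutter[OF assms(1)] .
  then have "clutter C" by (rule clutter_subset) (auto simp: C_def)
  obtain B0 where B0: "B0 \<in> \<B>" "B0 \<inter> mon_support N = {}"
    using assms(2,3) unfolding cover_ideal_def prime_mon_def mon_support_def
    by (force simp: disjoint_iff)
  have weight_iff: "(\<forall>G\<in>C. l \<le> sum s G) \<longleftrightarrow> (\<forall>F\<in>\<B>. l \<le> sum (fill_support N s) F)"
    if "sqfree_mon s" for s
  proof -
    have "(\<forall>G\<in>C. l \<le> sum s G) \<longleftrightarrow>
          (\<forall>F\<in>\<B>. F \<inter> mon_support N = {} \<longrightarrow> l \<le> sum (fill_support N s) F)"
      unfolding C_def by (auto simp: sum_fill_support_avoiding)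
    also have "\<dots> \<longleftrightarrow> (\<forall>F\<in>\<B>. l \<le> sum (fill_support N s) F)"
      using matroid_bases_weight_bound_iff_avoiding[OF assms(1) B0
          fill_support_maximal_on_support[OF that subset_refl], symmetric] .
    finally show ?thesis .
  qed
  show ?thesis
    unfolding colon_cover_ideal[OF assms(2)] C_def[symmetric] SF_cover_ideal[OF C_sub \<open>clutter C\<close>]
      colon_SF_cover_ideal[OF \<B>_sub \<open>clutter \<B>\<close> assms(2)]
    by (intro Collect_cong conj_cong bex_cong refl) (simp add: weight_iff)
qed

lemma mingens_cover_ideal_exists_base_avoiding:
  assumes "N \<in> mingens (cover_ideal n \<B>)" "0 < N v"
  shows "\<exists>F\<in>\<B>. F \<inter> (mon_support N - {v}) = {}"
proof (rule ccontr)
  assume "\<not> ?thesis"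
  then have meets: "\<forall>F\<in>\<B>. \<exists>i\<in>F. 0 < N i \<and> i \<noteq> v" by (auto simp: mon_support_def)
  have N: "N \<in> cover_ideal n \<B>" "\<forall>m'\<in>cover_ideal n \<B>. mdvd m' N \<longrightarrow> m' = N"
    using assms(1) unfolding mingens_def by auto
  have "N(v := 0) \<in> cover_ideal n \<B>"
    using N(1) meets unfolding cover_ideal_def prime_mon_def monomials_def by auto
  moreover have "mdvd (N(v := 0)) N" unfolding mdvd_def by auto
  ultimately have "N(v := 0) = N" using N(2) by blast
  then show False using assms(2) by (metis fun_upd_same less_irrefl)
qed

lemma colon_SF_cover_ideal_eq_SF_contract:
  assumes "matroid_bases {1..n} \<B>" "N \<in> mingens (cover_ideal n \<B>)" "0 < N v"
  shows "colon n (SF n (cover_ideal n \<B>) l) N =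
    SF n (colon n (cover_ideal n (contract_bases \<B> v)) N) (l - 1)"
proof -
  define T where "T = mon_support N - {v}"
  have N: "N \<in> monomials n" "\<forall>F\<in>\<B>. F \<inter> mon_support N \<noteq> {}"
    using assms(2) unfolding mingens_def cover_ideal_def prime_mon_def mon_support_def by auto
  have v: "v \<in> mon_support N" using assms(3) unfolding mon_support_def by simp
  obtain F0 where F0: "F0 \<in> \<B>" "F0 \<inter> T = {}"
    using mingens_cover_ideal_exists_base_avoiding[OF assms(2,3)] unfolding T_def by blast
  have avoiding_iff: "F \<inter> T = {} \<longleftrightarrow> v \<in> F \<and> (F - {v}) \<inter> mon_support N = {}" if "F \<in> \<B>" for F
    using N(2) that v unfolding T_def by blast
  have "contract_bases \<B> v = {F - {v} | F. F \<in> \<B> \<and> v \<in> F}"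
    using F0 avoiding_iff unfolding contract_bases_def by auto
  define C where "C = {G\<in>contract_bases \<B> v. G \<inter> mon_support N = {}}"
  have C_eq: "C = (\<lambda>F. F - {v}) ` {F\<in>\<B>. F \<inter> T = {}}"
    unfolding C_def \<open>contract_bases \<B> v = _\<close> using avoiding_iff by auto
  have contract: "matroid_bases ({1..n} - {v}) (contract_bases \<B> v)"
    using matroid_bases_contract_bases[OF assms(1)] .
  then have C_sub: "\<forall>G\<in>C. G \<subseteq> {1..n}" unfolding C_def matroid_bases_def by blast
  have "clutter C" using matroid_bases_clutter[OF contract] by (rule clutter_subset) (auto simp: C_def)
  have \<B>_sub: "\<forall>G\<in>\<B>. G \<subseteq> {1..n}" using assms(1) unfolding matroid_bases_def by blast
  have "clutter \<B>" using matroid_bases_clutter[OF assms(1)] .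
  have weight_iff: "(\<forall>F\<in>\<B>. l \<le> sum (fill_support N s) F) \<longleftrightarrow> (\<forall>G\<in>C. l - 1 \<le> sum s G)"
    if "sqfree_mon s" for s
  proof -
    have split: "sum (fill_support N s) F = 1 + sum s (F - {v})" if "F \<in> \<B>" "F \<inter> T = {}" for F
    proof -
      have "finite F" using \<B>_sub that(1) by (meson finite_atLeastAtMost finite_subset)
      moreover have "v \<in> F" "(F - {v}) \<inter> mon_support N = {}" using avoiding_iff that by auto
      ultimately have "sum (fill_support N s) F =
          fill_support N s v + sum (fill_support N s) (F - {v})"
        by (simp add: sum.remove)
      then show ?thesis
        using v sum_fill_support_avoiding[OF \<open>(F - {v}) \<inter> mon_support N = {}\<close>]
        by (simp add: fill_support_def)
    qed
    have "(\<forall>F\<in>\<B>. l \<le> sum (fill_support N s) F) \<longleftrightarrow>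
          (\<forall>F\<in>\<B>. F \<inter> T = {} \<longrightarrow> l \<le> sum (fill_support N s) F)"
      using matroid_bases_weight_bound_iff_avoiding[OF assms(1) F0
          fill_support_maximal_on_support[OF that]]
      unfolding T_def by blast
    also have "\<dots> \<longleftrightarrow> (\<forall>F\<in>\<B>. F \<inter> T = {} \<longrightarrow> l - 1 \<le> sum s (F - {v}))"
      using split by auto
    also have "\<dots> \<longleftrightarrow> (\<forall>G\<in>C. l - 1 \<le> sum s G)"
      unfolding C_eq by blast
    finally show ?thesis .
  qed
  show ?thesis
    unfolding colon_cover_ideal[OF N(1)] C_def[symmetric] SF_cover_ideal[OF C_sub \<open>clutter C\<close>]
      colon_SF_cover_ideal[OF \<B>_sub \<open>clutter \<B>\<close> N(1)]
    by (intro Collect_cong conj_cong bex_cong refl) (simp add: weight_iff)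
qed

theorem proposition3p13:
  fixes n :: nat and \<B> :: "nat set set" and N :: "nat \<Rightarrow> nat"
  assumes "matroid_bases {1..n} \<B>"
    and "N \<in> monomials n"
  shows "(N \<notin> cover_ideal n \<B> \<longrightarrow>
            (\<forall>l\<ge>1. SF n (colon n (cover_ideal n \<B>) N) l
                     = colon n (SF n (cover_ideal n \<B>) l) N))
       \<and> (N \<in> mingens (cover_ideal n \<B>) \<longrightarrow>
            (\<forall>v l. 0 < N v \<and> 1 < l \<longrightarrow>
               colon n (SF n (cover_ideal n \<B>) l) N
                 = SF n (colon n (cover_ideal n (contract_bases \<B> v)) N) (l - 1)))"
  using SF_colon_cover_ideal[OF assms] colon_SF_cover_ideal_eq_SF_contract[OF assms(1)] by blast

end
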